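(* Let $Y,X_1,\dots,X_k$ be Boolean variables and let $\gamma$ be a probabilistic circuit of the form $(Y\wedge\alpha)\vee(\neg Y\wedge\beta)$, where the root OR gate has parameter $\theta_Y$ on the wire from $Y\wedge\alpha$ and $\theta_{\neg Y}$ on the wire from $\neg Y\wedge\beta$, and $\alpha,\beta$ are probabilistic circuits over $X_1,\dots,X_k$ that are structurally identical (the same circuit graph, differing only in their OR-wire parameters $\theta^\alpha_{(n,c)}$ and $\theta^\beta_{(n,c)}$), with all parameters strictly positive. Let $\vee\alpha$ denote the logistic circuit whose root is an OR gate with the single input $\alpha$ carrying parameter $\theta_{\mathit{root}}=\log(\theta_Y/\theta_{\neg Y})$, and in which every OR-gate wire $(n,c)$ of $\alpha$ carries parameter $\log(\theta^\alpha_{(n,c)}/\theta^\beta_{(n,c)})$. Then for every $\mathbf{x}\in\{0,1\}^k$ with $\Pr_\gamma(\mathbf{x})>0$, $\Pr_\gamma(Y=1\mid\mathbf{x})$ equals the probability $\Pr(Y=1\mid\mathbf{x})$ defined by the logistic circuit $\vee\alpha$.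
   Context: A logical circuit over Boolean variables is a rooted directed acyclic graph whose leaves are literals $X$ or $\neg X$ and whose inner nodes are AND gates or OR gates. AND gates are decomposable (inputs mention disjoint variable sets), OR gates are deterministic (for any complete assignment at most one input is satisfied) and smooth (all inputs of an OR gate mention the same variables). A probabilistic circuit is such a circuit with a nonnegative parameter on each input wire of each OR gate, the parameters on the inputs of each OR gate summing to $1$; for a complete assignment $\mathbf{x}$ it defines $\Pr_n(\mathbf{x})=[\mathbf{x}\models n]$ at a leaf, $\Pr_n(\mathbf{x})=\prod_i\Pr_{c_i}(\mathbf{x})$ at an AND gate with children $c_i$, and $\Pr_n(\mathbf{x})=\sum_i\Pr_{c_i}(\mathbf{x})\theta_i$ at an OR gate with inputs $(c_i,\theta_i)$; conditional probabilities are derived from the joint distribution at the root. A logistic circuit is a logical circuit with decomposable AND gates, deterministic OR gates, an OR root, and a real parameter on each OR-gate input wire. For binary $\mathbf{x}$, the flow $f(n,\mathbf{x},c)$ from child $c$ of OR gate $n$ is $1$ if $\mathbf{x}$ satisfies the sentence of $c$ and $0$ otherwise. Weight function: $g_n(\mathbf{x})=0$ at a leaf; $g_n(\mathbf{x})=\sum_i g_{c_i}(\mathbf{x})$ at an AND gate; $g_n(\mathbf{x})=\sum_i f(n,\mathbf{x},c_i)(g_{c_i}(\mathbf{x})+\theta_i)$ at an OR gate with inputs $(c_i,\theta_i)$; with root $r$, the logistic circuit defines $\Pr(Y=1\mid\mathbf{x})=1/(1+\exp(-g_r(\mathbf{x})))$. *)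

theory Defs
  imports Complex_Main
begin

text \<open>A circuit is represented by its tree unfolding; each OR-gate input wire carries
  a parameter of type 'p. Leaves: Lit v True is the literal X_v, Lit v False is
  the literal (not X_v).\<close>

datatype 'p circ = Lit nat bool | And "'p circ list" | Or "('p circ \<times> 'p) list"

type_synonym assignment = "nat \<Rightarrow> bool"

fun vars :: "'p circ \<Rightarrow> nat set" where
  "vars (Lit v b) = {v}"
| "vars (And cs) = (\<Union>c\<in>set cs. vars c)"
| "vars (Or cs) = (\<Union>p\<in>set cs. vars (fst p))"

fun sat :: "'p circ \<Rightarrow> assignment \<Rightarrow> bool" where
  "sat (Lit v b) x = (x v = b)"
| "sat (And cs) x = (\<forall>c\<in>set cs. sat c x)"
| "sat (Or cs) x = (\<exists>p\<in>set cs. sat (fst p) x)"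

fun decomp_determ :: "'p circ \<Rightarrow> bool" where
  "decomp_determ (Lit v b) = True"
| "decomp_determ (And cs) =
     ((\<forall>c\<in>set cs. decomp_determ c) \<and>
      (\<forall>i j. i < length cs \<longrightarrow> j < length cs \<longrightarrow> i \<noteq> j \<longrightarrow> vars (cs ! i) \<inter> vars (cs ! j) = {}))"
| "decomp_determ (Or cs) =
     ((\<forall>p\<in>set cs. decomp_determ (fst p)) \<and>
      (\<forall>x i j. i < length cs \<longrightarrow> j < length cs \<longrightarrow> sat (fst (cs ! i)) x \<longrightarrow> sat (fst (cs ! j)) x \<longrightarrow> i = j))"

fun smooth :: "'p circ \<Rightarrow> bool" where
  "smooth (Lit v b) = True"
| "smooth (And cs) = (\<forall>c\<in>set cs. smooth c)"
| "smooth (Or cs) = ((\<forall>p\<in>set cs. smooth (fst p)) \<and> (\<forall>p\<in>set cs. \<forall>q\<in>set cs. vars (fst p) = vars (fst q)))"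

fun pc_params :: "real circ \<Rightarrow> bool" where
  "pc_params (Lit v b) = True"
| "pc_params (And cs) = (\<forall>c\<in>set cs. pc_params c)"
| "pc_params (Or cs) = ((\<forall>p\<in>set cs. pc_params (fst p)) \<and> (\<forall>p\<in>set cs. snd p \<ge> 0)
                        \<and> sum_list (map snd cs) = 1)"

fun pos_params :: "real circ \<Rightarrow> bool" where
  "pos_params (Lit v b) = True"
| "pos_params (And cs) = (\<forall>c\<in>set cs. pos_params c)"
| "pos_params (Or cs) = ((\<forall>p\<in>set cs. pos_params (fst p)) \<and> (\<forall>p\<in>set cs. snd p > 0))"

definition is_pc :: "real circ \<Rightarrow> bool" where
  "is_pc c \<longleftrightarrow> decomp_determ c \<and> smooth c \<and> pc_params c"

fun pc_prob :: "real circ \<Rightarrow> assignment \<Rightarrow> real" where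
  "pc_prob (Lit v b) x = (if x v = b then 1 else 0)"
| "pc_prob (And cs) x = prod_list (map (\<lambda>c. pc_prob c x) cs)"
| "pc_prob (Or cs) x = sum_list (map (\<lambda>p. pc_prob (fst p) x * snd p) cs)"

text \<open>Weight function g of a logistic circuit (flow = satisfaction of the child).\<close>
fun lc_weight :: "real circ \<Rightarrow> assignment \<Rightarrow> real" where
  "lc_weight (Lit v b) x = 0"
| "lc_weight (And cs) x = sum_list (map (\<lambda>c. lc_weight c x) cs)"
| "lc_weight (Or cs) x =
     sum_list (map (\<lambda>p. (if sat (fst p) x then 1 else 0) * (lc_weight (fst p) x + snd p)) cs)"

definition lc_prob :: "real circ \<Rightarrow> assignment \<Rightarrow> real" where
  "lc_prob c x = 1 / (1 + exp (- lc_weight c x))"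

text \<open>Y is variable 0, X_1..X_k are variables 1..k.
  gamma = (Y and alpha) or (not Y and beta).\<close>
definition gamma :: "real \<Rightarrow> real \<Rightarrow> real circ \<Rightarrow> real circ \<Rightarrow> real circ" where
  "gamma tY tN \<alpha> \<beta> = Or [(And [Lit 0 True, \<alpha>], tY), (And [Lit 0 False, \<beta>], tN)]"

definition marg_Y :: "real circ \<Rightarrow> assignment \<Rightarrow> real" where
  "marg_Y g x = pc_prob g (x(0 := True)) + pc_prob g (x(0 := False))"

definition cond_Y1 :: "real circ \<Rightarrow> assignment \<Rightarrow> real" where
  "cond_Y1 g x = pc_prob g (x(0 := True)) / marg_Y g x"

end

theory Submission
  imports Defs
begin

(* Since \<alpha> and \<beta> share their circuit graph, an assignment x satisfying their common sentence
   selects at every deterministic OR gate the same unique satisfied input in both circuits; with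
   positive parameters Pr_\<alpha>(x) / Pr_\<beta>(x) is then the product of \<theta>\<alpha> / \<theta>\<beta> over the selected wires,
   and its logarithm is the weight of the logistic circuit carrying ln (\<theta>\<alpha> / \<theta>\<beta>). As Y does not
   occur in \<alpha> and \<beta>, Pr_\<gamma>(Y=1 | x) = \<theta>Y Pr_\<alpha>(x) / (\<theta>Y Pr_\<alpha>(x) + \<theta>N Pr_\<beta>(x)), the logistic function
   of ln (\<theta>Y / \<theta>N) + ln (Pr_\<alpha>(x) / Pr_\<beta>(x)). *)

lemma circ_induct [case_names Lit And Or]:
  assumes "\<And>v b. P (Lit v b)"
    and "\<And>cs. (\<And>c. c \<in> set cs \<Longrightarrow> P c) \<Longrightarrow> P (And cs)"
    and "\<And>cs. (\<And>p. p \<in> set cs \<Longrightarrow> P (fst p)) \<Longrightarrow> P (Or cs)"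
  shows "P c"
proof (induction c)
  case (Or cs)
  then show ?case by (intro assms(3)) (metis fsts.intros prod.collapse)
qed (use assms in auto)

lemma sat_map_circ [simp]: "sat (map_circ f c) x = sat c x"
  by (induction c rule: circ_induct) auto

lemma vars_map_circ [simp]: "vars (map_circ f c) = vars c"
  by (induction c rule: circ_induct) auto

lemma decomp_determ_map_circ [simp]: "decomp_determ (map_circ f c) = decomp_determ c"
  by (induction c rule: circ_induct) auto

lemma pc_prob_nonneg: "pos_params c \<Longrightarrow> 0 \<le> pc_prob c x"
  by (induction c rule: circ_induct)
     (force intro!: prod_list_nonneg sum_list_nonneg mult_nonneg_nonneg simp: less_imp_le)+

lemma pc_prob_unsat: "\<not> sat c x \<Longrightarrow> pc_prob c x = 0"
proof (induction c rule: circ_induct)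
  case (Or cs)
  then show ?case by (simp cong: map_cong)
qed (force simp: prod_list_zero_iff)+

lemma pc_prob_pos: "pos_params c \<Longrightarrow> sat c x \<Longrightarrow> 0 < pc_prob c x"
proof (induction c rule: circ_induct)
  case (And cs)
  then show ?case by (induction cs) auto
next
  case (Or cs)
  then obtain p where p: "p \<in> set cs" "sat (fst p) x" by auto
  have "0 < pc_prob (fst p) x * snd p"
    using Or p by simp
  moreover have "0 \<le> pc_prob (fst q) x * snd q" if "q \<in> set cs" for q
    using Or.prems that by (simp add: pc_prob_nonneg less_imp_le)
  ultimately show ?case
    using p(1) by (fastforce intro: less_le_trans[OF _ member_le_sum_list])
qed simp

lemma sum_list_map_eq_nth:
  fixes f :: "'a \<Rightarrow> 'b :: comm_monoid_add"
  assumes "i < length xs" and "\<And>j. j < length xs \<Longrightarrow> j \<noteq> i \<Longrightarrow> f (xs ! j) = 0"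
  shows "sum_list (map f xs) = f (xs ! i)"
proof -
  have "sum_list (map f xs) = (\<Sum>j<length xs. f (xs ! j))"
    by (simp add: sum_list_sum_nth atLeast0LessThan)
  also have "\<dots> = f (xs ! i)"
    using assms by (subst sum.remove[of _ i]) (auto intro!: sum.neutral)
  finally show ?thesis .
qed

lemma pc_prob_determ_Or:
  assumes "decomp_determ (Or cs)" "i < length cs" "sat (fst (cs ! i)) x"
  shows "pc_prob (Or cs) x = pc_prob (fst (cs ! i)) x * snd (cs ! i)"
  unfolding pc_prob.simps
proof (rule sum_list_map_eq_nth[OF assms(2)])
  fix j assume "j < length cs" "j \<noteq> i"
  then have "\<not> sat (fst (cs ! j)) x" using assms by auto
  then show "pc_prob (fst (cs ! j)) x * snd (cs ! j) = 0" by (simp add: pc_prob_unsat)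
qed

lemma lc_weight_determ_Or:
  assumes "decomp_determ (Or cs)" "i < length cs" "sat (fst (cs ! i)) x"
  shows "lc_weight (Or cs) x = lc_weight (fst (cs ! i)) x + snd (cs ! i)"
  unfolding lc_weight.simps
proof (subst sum_list_map_eq_nth[OF assms(2)])
  fix j assume "j < length cs" "j \<noteq> i"
  then have "\<not> sat (fst (cs ! j)) x" using assms by auto
  then show "(if sat (fst (cs ! j)) x then 1 else 0) * (lc_weight (fst (cs ! j)) x + snd (cs ! j)) = 0"
    by simp
qed (use assms(3) in simp)

lemma prod_list_pos:
  "(\<And>x. x \<in> set xs \<Longrightarrow> (0 :: 'a :: linordered_semidom) < x) \<Longrightarrow> 0 < prod_list xs"
  by (induction xs) auto

lemma ln_prod_list:
  fixes f :: "'a \<Rightarrow> real"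
  shows "(\<And>c. c \<in> set cs \<Longrightarrow> 0 < f c) \<Longrightarrow> ln (prod_list (map f cs)) = (\<Sum>c\<leftarrow>cs. ln (f c))"
proof (induction cs)
  case (Cons c cs)
  have "0 < prod_list (map f cs)"
    using Cons.prems by (intro prod_list_pos) auto
  moreover have "0 < f c"
    using Cons.prems by simp
  ultimately show ?case
    using Cons by (simp add: ln_mult_pos)
qed simp

lemma ln_pc_prob_ratio_eq_lc_weight:
  fixes \<delta> :: "(real \<times> real) circ"
  assumes "decomp_determ \<delta>" "pos_params (map_circ fst \<delta>)" "pos_params (map_circ snd \<delta>)" "sat \<delta> x"
  shows "ln (pc_prob (map_circ fst \<delta>) x / pc_prob (map_circ snd \<delta>) x)
         = lc_weight (map_circ (\<lambda>(a, b). ln (a / b)) \<delta>) x"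
  using assms
proof (induction \<delta> rule: circ_induct)
  case (Lit v b)
  then show ?case by simp
next
  case (And cs)
  define A where "A c = pc_prob (map_circ fst c) x" for c :: "(real \<times> real) circ"
  define B where "B c = pc_prob (map_circ snd c) x" for c :: "(real \<times> real) circ"
  have pos: "0 < A c" "0 < B c" if "c \<in> set cs" for c
    using And.prems that by (auto simp: A_def B_def intro: pc_prob_pos)
  have prod: "pc_prob (map_circ fst (And cs)) x = prod_list (map A cs)"
    "pc_prob (map_circ snd (And cs)) x = prod_list (map B cs)"
    by (simp_all add: A_def[abs_def] B_def[abs_def] o_def)
  have "0 < prod_list (map A cs)" "0 < prod_list (map B cs)"
    using pos by (auto intro!: prod_list_pos)
  then have "ln (pc_prob (map_circ fst (And cs)) x / pc_prob (map_circ snd (And cs)) x)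
        = ln (prod_list (map A cs)) - ln (prod_list (map B cs))"
    unfolding prod by (simp add: ln_div)
  also have "\<dots> = (\<Sum>c\<leftarrow>cs. ln (A c) - ln (B c))"
    using pos by (simp add: ln_prod_list sum_list_subtractf)
  also have "\<dots> = (\<Sum>c\<leftarrow>cs. ln (A c / B c))"
    using pos by (intro arg_cong[where f = sum_list] map_cong) (fastforce simp: ln_div)+
  also have "\<dots> = lc_weight (map_circ (\<lambda>(a, b). ln (a / b)) (And cs)) x"
    using And by (simp add: A_def B_def o_def cong: map_cong)
  finally show ?case .
next
  case (Or cs)
  then obtain i where i: "i < length cs" "sat (fst (cs ! i)) x"
    by (auto simp: in_set_conv_nth)
  define c where "c = fst (cs ! i)"
  define a where "a = fst (snd (cs ! i))"
  define b where "b = snd (snd (cs ! i))"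
  have c: "decomp_determ c" "pos_params (map_circ fst c)" "pos_params (map_circ snd c)" "sat c x"
    using Or.prems i by (auto simp: c_def)
  have ab: "0 < a" "0 < b"
    using Or.prems i by (auto simp: a_def b_def)
  have det: "decomp_determ (Or (map (map_prod (map_circ f) f) cs))" for f :: "real \<times> real \<Rightarrow> real"
    using Or.prems(1) decomp_determ_map_circ[of f "Or cs"] by simp
  have "pc_prob (map_circ fst (Or cs)) x = pc_prob (map_circ fst c) x * a"
    using pc_prob_determ_Or[OF det[of fst], of i x] i by (simp add: c_def a_def)
  moreover have "pc_prob (map_circ snd (Or cs)) x = pc_prob (map_circ snd c) x * b"
    using pc_prob_determ_Or[OF det[of snd], of i x] i by (simp add: c_def b_def)
  moreover have "lc_weight (map_circ (\<lambda>(a, b). ln (a / b)) (Or cs)) x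
      = lc_weight (map_circ (\<lambda>(a, b). ln (a / b)) c) x + ln (a / b)"
    using lc_weight_determ_Or[OF det[of "\<lambda>(a, b). ln (a / b)"], of i x] i
    by (simp add: c_def a_def b_def case_prod_beta)
  moreover have "ln (pc_prob (map_circ fst c) x / pc_prob (map_circ snd c) x)
      = lc_weight (map_circ (\<lambda>(a, b). ln (a / b)) c) x"
    using Or.IH[of "cs ! i"] i c by (simp add: c_def)
  ultimately show ?case
    using c ab pc_prob_pos[of "map_circ fst c" x] pc_prob_pos[of "map_circ snd c" x]
    by (simp add: ln_div ln_mult_pos)
qed

lemma pc_prob_cong_vars: "(\<And>v. v \<in> vars c \<Longrightarrow> x v = y v) \<Longrightarrow> pc_prob c x = pc_prob c y"
  by (induction c rule: circ_induct)
     (fastforce intro!: arg_cong[where f = prod_list] arg_cong[where f = sum_list] map_cong)+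

lemma pc_prob_fun_upd_notin_vars: "v \<notin> vars c \<Longrightarrow> pc_prob c (x(v := b)) = pc_prob c x"
  by (rule pc_prob_cong_vars) auto

lemma marg_Y_gamma:
  assumes "0 \<notin> vars \<alpha>" "0 \<notin> vars \<beta>"
  shows "marg_Y (gamma tY tN \<alpha> \<beta>) x = pc_prob \<alpha> x * tY + pc_prob \<beta> x * tN"
  using assms by (simp add: marg_Y_def gamma_def pc_prob_fun_upd_notin_vars)

lemma cond_Y1_gamma:
  assumes "0 \<notin> vars \<alpha>" "0 \<notin> vars \<beta>"
  shows "cond_Y1 (gamma tY tN \<alpha> \<beta>) x = pc_prob \<alpha> x * tY / (pc_prob \<alpha> x * tY + pc_prob \<beta> x * tN)"
  using assms unfolding cond_Y1_def marg_Y_gamma[OF assms]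
  by (simp add: gamma_def pc_prob_fun_upd_notin_vars)

lemma logistic_ln_odds:
  fixes p q :: real
  assumes "0 < p" "0 < q"
  shows "1 / (1 + exp (- ln (p / q))) = p / (p + q)"
proof -
  have "exp (- ln (p / q)) = q / p"
    using assms by (simp add: exp_minus)
  then have "1 / (1 + exp (- ln (p / q))) = 1 / (1 + q / p)"
    by simp
  also have "\<dots> = p / (p + q)"
    using assms by (simp add: field_simps)
  finally show ?thesis .
qed

theorem proposition4:
  fixes \<delta> :: "(real \<times> real) circ" and \<theta>Y \<theta>N :: real and k :: nat and x :: assignment
  defines "\<alpha> \<equiv> map_circ fst \<delta>" and "\<beta> \<equiv> map_circ snd \<delta>"
  assumes "vars \<delta> \<subseteq> {1..k}"
    and "is_pc \<alpha>" and "is_pc \<beta>" and "pos_params \<alpha>" and "pos_params \<beta>"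
    and "\<theta>Y > 0" and "\<theta>N > 0"
    and "is_pc (gamma \<theta>Y \<theta>N \<alpha> \<beta>)"
    and "marg_Y (gamma \<theta>Y \<theta>N \<alpha> \<beta>) x > 0"
  shows "cond_Y1 (gamma \<theta>Y \<theta>N \<alpha> \<beta>) x =
         lc_prob (Or [(map_circ (\<lambda>(a, b). ln (a / b)) \<delta>, ln (\<theta>Y / \<theta>N))]) x"
proof -
  have Y_fresh: "0 \<notin> vars \<alpha>" "0 \<notin> vars \<beta>"
    using assms(3) by (auto simp: \<alpha>_def \<beta>_def)
  have "sat \<delta> x"
  proof (rule ccontr)
    assume "\<not> sat \<delta> x"
    then have "pc_prob \<alpha> x = 0" "pc_prob \<beta> x = 0"
      by (simp_all add: \<alpha>_def \<beta>_def pc_prob_unsat)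
    then show False
      using assms(11) by (simp add: marg_Y_gamma[OF Y_fresh])
  qed
  then have pos: "0 < pc_prob \<alpha> x" "0 < pc_prob \<beta> x"
    using assms(6,7) by (simp_all add: \<alpha>_def \<beta>_def pc_prob_pos)
  have "decomp_determ \<delta>"
    using assms(4) by (simp add: is_pc_def \<alpha>_def)
  then have "lc_weight (Or [(map_circ (\<lambda>(a, b). ln (a / b)) \<delta>, ln (\<theta>Y / \<theta>N))]) x
      = ln (pc_prob \<alpha> x / pc_prob \<beta> x) + ln (\<theta>Y / \<theta>N)"
    using ln_pc_prob_ratio_eq_lc_weight[of \<delta> x] \<open>sat \<delta> x\<close> assms(6,7)
    by (simp add: \<alpha>_def \<beta>_def)
  also have "\<dots> = ln ((pc_prob \<alpha> x * \<theta>Y) / (pc_prob \<beta> x * \<theta>N))"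
    using pos assms(8,9) by (simp add: ln_div ln_mult_pos)
  finally show ?thesis
    using pos assms(8,9)
    by (simp add: lc_prob_def cond_Y1_gamma[OF Y_fresh] logistic_ln_odds)
qed

end
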